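(* Let $P^0\in\Delta^{n-1}_+$ and let $J$ be a set of pairs $(i,j)$ of indices with $1\le j<i\le n$. Assume that $\frac{p^0_j}{p^*_j}-\frac{p^0_i}{p^*_i}\neq 0$ for every $(i,j)\in J$. Then there exists a neighbourhood $U$ of $P^0$ in $\mathbb{R}^n$ such that $$\bigl(P^0+\mathbf{Q}_J(P^0,P^* )\bigr)\cap U=\Phi_J(P^0)\cap U .$$
   Context: Fix $n\ge 2$ and a positive equilibrium distribution $P^*=(p^*_i)$, $p^*_i>0$, $\sum_i p^*_i=1$. Let $\Delta^{n-1}_+=\{P=(p_i)\in\mathbb{R}^n: p_i>0,\ \sum_i p_i=1\}$. For $i\neq j$ let $\gamma^{ji}\in\mathbb{R}^n$ be the vector with $\gamma^{ji}_j=-1$, $\gamma^{ji}_i=1$ and all other coordinates $0$. For a finite set of vectors, ${\rm cone}$ denotes the set of all their linear combinations with non-negative coefficients; ${\rm sign}$ is the three-valued sign function (values $-1,0,1$). For a set $J$ of pairs $(i,j)$ with $i>j$: $$\mathbf{Q}_J(P,P^* )={\rm cone}\Bigl\{\gamma^{ji}\,{\rm sign}\Bigl(\tfrac{p_j}{p^*_j}-\tfrac{p_i}{p^*_i}\Bigr)\ :\ (i,j)\in J\Bigr\}.$$ $\mathcal{K}_J$ is the class of all ODE systems $$\frac{dP}{dt}=\sum_{(i,j)\in J} w^*_{ij}\Bigl(\frac{p_j}{p^*_j}-\frac{p_i}{p^*_i}\Bigr)\gamma^{ji}$$ with arbitrary constants $w^*_{ij}\ge 0$ (these are the Kolmogorov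 equations of reversible Markov chains with detailed balance, equilibrium $P^*$, and transitions $A_i\rightleftharpoons A_j$ only for $(i,j)\in J$). $\Phi_J(P^0)$ is the set of all values $P(t)$, $t>0$, of solutions $P(t)$ with $P(0)=P^0$ of all systems in $\mathcal{K}_J$. *)

theory Defs
  imports "HOL-Analysis.Analysis"
begin

text \<open>Vectors in R^n are modelled as real^'n for a finite, linearly ordered index type 'n
  (the order is used for the convention i > j on pairs).\<close>

definition gam :: "'n::finite \<Rightarrow> 'n \<Rightarrow> real^'n" where
  "gam j i = (\<chi> k. if k = i then 1 else if k = j then -1 else 0)"

definition simplex_pos :: "(real^'n::finite) set" where
  "simplex_pos = {P. (\<forall>i. P $ i > 0) \<and> (\<Sum>i\<in>UNIV. P $ i) = 1}"

definition QJ :: "('n::finite \<times> 'n) set \<Rightarrow> real^'n \<Rightarrow> real^'n \<Rightarrow> (real^'n) set" where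
  "QJ J P Ps = {(\<Sum>(i,j)\<in>J. c (i,j) *\<^sub>R (sgn (P$j / Ps$j - P$i / Ps$i) *\<^sub>R gam j i)) | c.
                 \<forall>p\<in>J. c p \<ge> 0}"

definition kolm_rhs :: "('n::finite \<times> 'n) set \<Rightarrow> ('n \<times> 'n \<Rightarrow> real) \<Rightarrow> real^'n \<Rightarrow> real^'n \<Rightarrow> real^'n" where
  "kolm_rhs J w Ps P = (\<Sum>(i,j)\<in>J. (w (i,j) * (P$j / Ps$j - P$i / Ps$i)) *\<^sub>R gam j i)"

definition PhiJ :: "('n::finite \<times> 'n) set \<Rightarrow> real^'n \<Rightarrow> real^'n \<Rightarrow> (real^'n) set" where
  "PhiJ J Ps P0 = {x. \<exists>w Pt t. (\<forall>p\<in>J. w p \<ge> 0) \<and> t > 0 \<and> Pt 0 = P0 \<and>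
      (\<forall>s\<ge>0. (Pt has_vector_derivative kolm_rhs J w Ps (Pt s)) (at s within {0..})) \<and>
      x = Pt t}"

end

theory Submission
  imports Defs
begin

text \<open>Orient every transition \<open>e = (i,j)\<close> so that its gap \<open>p\<^sub>j/p\<^sup>*\<^sub>j - p\<^sub>i/p\<^sup>*\<^sub>i\<close>
  is positive at \<open>P0\<close>, and let \<open>m\<close> be the least of these gaps.
  Along a solution, \<open>P(t) - P0\<close> is a combination of the oriented rays \<open>\<plusminus>\<gamma>\<^sup>j\<^sup>i\<close> with
  coefficients \<open>\<integral> w\<^sub>e gap\<^sub>e\<close>, which stay non-negative while all gaps stay positive.
  A gap can only fall to \<open>m/2\<close> after the Lyapunov function \<open>\<Sum> p\<^sub>k\<^sup>2/p\<^sup>*\<^sub>k\<close>, which never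
  increases, has dropped by a fixed amount; so near \<open>P0\<close> every reachable point lies in the cone.
  Conversely, with constant rates \<open>v\<close> the solution is \<open>exp(t F\<^sub>v) P0\<close>, hence
  \<open>P(1) = P0 + F\<^sub>v(\<phi>\<^sub>1(F\<^sub>v) P0)\<close> with \<open>\<phi>\<^sub>1(z) = (e\<^sup>z - 1)/z\<close>. For small \<open>v\<close> the point
  \<open>\<phi>\<^sub>1(F\<^sub>v) P0\<close> is close to \<open>P0\<close>, so hitting a prescribed small cone point
  \<open>P0 + \<Sum> c\<^sub>e ray\<^sub>e\<close> means solving \<open>v\<^sub>e \<cdot> gap\<^sub>e(\<phi>\<^sub>1(F\<^sub>v) P0) = c\<^sub>e\<close>, a fixed-point
  problem settled by Brouwer's theorem.\<close>

lemma norm_funpow_le: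
  fixes f :: "'a::real_normed_vector \<Rightarrow> 'a"
  assumes "\<And>x. norm (f x) \<le> C * norm x" "0 \<le> C"
  shows "norm ((f ^^ n) x) \<le> C ^ n * norm x"
proof (induction n)
  case (Suc n)
  have "norm ((f ^^ Suc n) x) \<le> C * norm ((f ^^ n) x)" by (simp add: assms(1))
  also have "\<dots> \<le> C * (C ^ n * norm x)" by (rule mult_left_mono[OF Suc assms(2)])
  finally show ?case by (simp add: mult.assoc)
qed simp

lemma norm_exp_term_funpow_le:
  fixes f :: "'a::real_normed_vector \<Rightarrow> 'a"
  assumes bound: "\<And>x. norm (f x) \<le> C * norm x" "0 \<le> C"
    and a: "\<bar>a\<bar> \<le> inverse (fact n) * r ^ n"
  shows "norm (a *\<^sub>R (f ^^ n) x) \<le> norm x * (inverse (fact n) * (r * C) ^ n)"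
proof -
  have "norm (a *\<^sub>R (f ^^ n) x) \<le> (inverse (fact n) * r ^ n) * (C ^ n * norm x)"
    unfolding norm_scaleR by (intro mult_mono a norm_funpow_le bound order_trans[OF abs_ge_zero a]) auto
  then show ?thesis by (simp add: power_mult_distrib algebra_simps)
qed

lemma summable_exp_terms_funpow:
  fixes f :: "'a::banach \<Rightarrow> 'a"
  assumes "\<And>x. norm (f x) \<le> C * norm x" "0 \<le> C"
    and "\<And>n. \<bar>a n\<bar> \<le> inverse (fact n) * r ^ n"
  shows "summable (\<lambda>n. a n *\<^sub>R (f ^^ n) x)"
  by (rule summable_comparison_test[OF _ summable_mult[OF summable_exp]])
     (use norm_exp_term_funpow_le[OF assms] in blast)

definition linexp :: "('a::real_normed_vector \<Rightarrow> 'a) \<Rightarrow> real \<Rightarrow> 'a \<Rightarrow> 'a" where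
  "linexp f s x = (\<Sum>n. (s ^ n / fact n) *\<^sub>R (f ^^ n) x)"

definition phi1 :: "('a::real_normed_vector \<Rightarrow> 'a) \<Rightarrow> 'a \<Rightarrow> 'a" where
  "phi1 f x = (\<Sum>n. inverse (fact (Suc n)) *\<^sub>R (f ^^ n) x)"

lemma linexp_0: "linexp f 0 x = x"
  unfolding linexp_def by (subst suminf_finite[of "{0}"]) auto

lemma phi1_zero: "phi1 (\<lambda>_. 0) x = x"
  unfolding phi1_def by (subst suminf_finite[of "{0}"]) (auto simp: gr0_conv_Suc)

context
  fixes f :: "'a::banach \<Rightarrow> 'a"
  assumes f: "bounded_linear f"
begin

lemma bounded_linear_norm_le_mult: "\<exists>C\<ge>0. \<forall>x. norm (f x) \<le> C * norm x"
  using bounded_linear.nonneg_bounded[OF f] by (metis mult.commute)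

lemma summable_linexp: "summable (\<lambda>n. (s ^ n / fact n) *\<^sub>R (f ^^ n) x)"
proof -
  obtain C where "0 \<le> C" "\<And>x. norm (f x) \<le> C * norm x" using bounded_linear_norm_le_mult by blast
  then show ?thesis
    by (intro summable_exp_terms_funpow[where r = "\<bar>s\<bar>" and C = C])
       (auto simp: abs_mult power_abs divide_inverse)
qed

lemma summable_phi1: "summable (\<lambda>n. inverse (fact (Suc n)) *\<^sub>R (f ^^ n) x)"
proof -
  obtain C where "0 \<le> C" "\<And>x. norm (f x) \<le> C * norm x" using bounded_linear_norm_le_mult by blast
  moreover have "inverse (fact (Suc n)) \<le> inverse (fact n :: real)" for n
    by (rule le_imp_inverse_le) (auto intro: fact_mono)
  ultimately show ?thesis
    by (intro summable_exp_terms_funpow[where r = 1]) auto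
qed

lemma linexp_1: "linexp f 1 x = x + f (phi1 f x)"
proof -
  have "linexp f 1 x = x + (\<Sum>n. inverse (fact (Suc n)) *\<^sub>R (f ^^ Suc n) x)"
    unfolding linexp_def using suminf_split_head[OF summable_linexp, of 1 x]
    by (simp add: divide_inverse)
  also have "(\<Sum>n. inverse (fact (Suc n)) *\<^sub>R (f ^^ Suc n) x) = f (phi1 f x)"
    unfolding phi1_def bounded_linear.suminf[OF f summable_phi1]
    by (simp add: linear_scale[OF bounded_linear.linear[OF f]])
  finally show ?thesis .
qed

lemma linexp_commute: "f (linexp f s x) = linexp f s (f x)"
  unfolding linexp_def bounded_linear.suminf[OF f summable_linexp]
  by (simp add: linear_scale[OF bounded_linear.linear[OF f]] funpow_swap1)

end

lemma has_vector_derivative_componentwise: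
  fixes g :: "real \<Rightarrow> 'a::euclidean_space"
  assumes "\<And>b. b \<in> Basis \<Longrightarrow> ((\<lambda>s. g s \<bullet> b) has_real_derivative D \<bullet> b) (at s within S)"
  shows "(g has_vector_derivative D) (at s within S)"
  unfolding has_vector_derivative_def
  by (rule has_derivative_componentwise_within[THEN iffD2])
     (use assms in \<open>simp add: has_field_derivative_def mult_commute_abs\<close>)

lemma has_vector_derivative_linexp:
  fixes f :: "'a::euclidean_space \<Rightarrow> 'a"
  assumes f: "bounded_linear f"
  shows "((\<lambda>s. linexp f s x) has_vector_derivative f (linexp f s x)) (at s within S)"
proof (rule has_vector_derivative_componentwise)
  fix b :: 'a
  define c where "c y n = ((f ^^ n) y \<bullet> b) / fact n" for y n
  have inner_linexp: "linexp f s y \<bullet> b = (\<Sum>n. c y n * s ^ n)" for s y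
    unfolding linexp_def c_def bounded_linear.suminf[OF bounded_linear_inner_left summable_linexp[OF f]]
    by (simp add: ac_simps)
  have "summable (\<lambda>n. c x n * s ^ n)" for s
    using bounded_linear.summable[OF bounded_linear_inner_left summable_linexp[OF f], of s x b]
    by (simp add: c_def ac_simps)
  then have "((\<lambda>s. \<Sum>n. c x n * s ^ n) has_real_derivative (\<Sum>n. diffs (c x) n * s ^ n)) (at s)"
    by (rule termdiffs_strong_converges_everywhere)
  moreover have "diffs (c x) = c (f x)"
    by (simp add: fun_eq_iff diffs_def c_def funpow_Suc_right del: funpow.simps)
  ultimately show "((\<lambda>s. linexp f s x \<bullet> b) has_real_derivative f (linexp f s x) \<bullet> b) (at s within S)"
    unfolding inner_linexp linexp_commute[OF f] by (simp add: has_field_derivative_at_within)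
qed

lemma continuous_on_funpow_param:
  fixes F :: "'v::topological_space \<Rightarrow> 'a::topological_space \<Rightarrow> 'a"
  assumes "\<And>g. continuous_on K g \<Longrightarrow> continuous_on K (\<lambda>v. F v (g v))"
  shows "continuous_on K (\<lambda>v. (F v ^^ n) x)"
  by (induction n) (simp_all add: assms)

lemma continuous_on_phi1_param:
  fixes F :: "'v::topological_space \<Rightarrow> 'a::banach \<Rightarrow> 'a"
  assumes bound: "\<And>v x. v \<in> K \<Longrightarrow> norm (F v x) \<le> C * norm x" "0 \<le> C"
    and cont: "\<And>g. continuous_on K g \<Longrightarrow> continuous_on K (\<lambda>v. F v (g v))"
  shows "continuous_on K (\<lambda>v. phi1 (F v) x)"
  unfolding phi1_def
proof (rule uniform_limit_theorem)
  have "inverse (fact (Suc n)) \<le> inverse (fact n) * (1::real) ^ n" for n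
    by (simp add: le_imp_inverse_le fact_mono del: fact_Suc)
  then have "norm (inverse (fact (Suc n)) *\<^sub>R (F v ^^ n) x) \<le> norm x * (inverse (fact n) * (1 * C) ^ n)"
    if "v \<in> K" for v n
    by (intro norm_exp_term_funpow_le bound that) auto
  then show "uniform_limit K (\<lambda>n v. \<Sum>k<n. inverse (fact (Suc k)) *\<^sub>R (F v ^^ k) x)
      (\<lambda>v. \<Sum>k. inverse (fact (Suc k)) *\<^sub>R (F v ^^ k) x) sequentially"
    by (rule Weierstrass_m_test) (auto intro: summable_mult summable_exp)
  show "\<forall>\<^sub>F n in sequentially. continuous_on K (\<lambda>v. \<Sum>k<n. inverse (fact (Suc k)) *\<^sub>R (F v ^^ k) x)"
    by (intro always_eventually allI continuous_intros continuous_on_funpow_param cont)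
qed simp

definition ratio_gap :: "real^'n \<Rightarrow> 'n \<times> 'n \<Rightarrow> real^'n \<Rightarrow> real" where
  "ratio_gap Ps e X = X$snd e / Ps$snd e - X$fst e / Ps$fst e"

definition lyapunov :: "real^'n::finite \<Rightarrow> real^'n \<Rightarrow> real" where
  "lyapunov Ps X = (\<Sum>k\<in>UNIV. (X$k)^2 / Ps$k)"

lemma kolm_rhs_ratio_gap:
  "kolm_rhs J w Ps X = (\<Sum>e\<in>J. (w e * ratio_gap Ps e X) *\<^sub>R gam (snd e) (fst e))"
  unfolding kolm_rhs_def ratio_gap_def by (simp add: case_prod_beta)

lemma linear_ratio_gap: "linear (ratio_gap Ps e)"
  by (rule linearI) (simp_all add: ratio_gap_def add_divide_distrib algebra_simps)

lemma bounded_linear_kolm_rhs: "bounded_linear (kolm_rhs J w (Ps::real^'n::finite))"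
proof (rule linear_conv_bounded_linear[THEN iffD1], rule linearI)
  note gap = linear_add[OF linear_ratio_gap] linear_scale[OF linear_ratio_gap]
  show "kolm_rhs J w Ps (X + Y) = kolm_rhs J w Ps X + kolm_rhs J w Ps Y" for X Y
    unfolding kolm_rhs_ratio_gap gap by (simp add: distrib_left scaleR_add_left sum.distrib)
  show "kolm_rhs J w Ps (c *\<^sub>R X) = c *\<^sub>R kolm_rhs J w Ps X" for c X
    unfolding kolm_rhs_ratio_gap gap by (simp add: scaleR_sum_right mult.left_commute)
qed

lemma sum_mult_gam:
  fixes x :: "'n::finite \<Rightarrow> real"
  assumes "i \<noteq> j"
  shows "(\<Sum>k\<in>UNIV. x k * gam j i $ k) = x i - x j"
proof -
  have "(\<Sum>k\<in>UNIV. x k * gam j i $ k) = (\<Sum>k\<in>UNIV. (if k = i then x k else 0) - (if k = j then x k else 0))"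
    by (rule sum.cong) (use assms in \<open>auto simp: gam_def\<close>)
  also have "\<dots> = x i - x j" by (simp add: sum_subtractf)
  finally show ?thesis .
qed

lemma norm_gam_le: "norm (gam j i :: real^'n::finite) \<le> 2"
proof -
  have "norm (gam j i :: real^'n) \<le> (\<Sum>k\<in>UNIV. \<bar>gam j i $ k\<bar>)" by (rule norm_le_l1_cart)
  also have "\<dots> \<le> (\<Sum>k\<in>UNIV. (if k = i then 1 else 0) + (if k = j then 1 else 0))"
    by (rule sum_mono) (auto simp: gam_def)
  also have "\<dots> = 2" by (simp add: sum.distrib)
  finally show ?thesis .
qed

lemma first_hitting_time:
  fixes g :: "'i \<Rightarrow> real \<Rightarrow> real"
  assumes "finite I" and cont: "\<And>i. i \<in> I \<Longrightarrow> continuous_on {0..t} (g i)"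
    and start: "\<And>i. i \<in> I \<Longrightarrow> a < g i 0"
    and hit: "i \<in> I" "s \<in> {0..t}" "g i s \<le> a"
  shows "\<exists>\<tau>\<in>{0..t}. (\<exists>i\<in>I. g i \<tau> \<le> a) \<and> (\<forall>i\<in>I. \<forall>u\<in>{0..\<tau>}. a \<le> g i u)"
proof -
  define T where "T = (\<Union>i\<in>I. {0..t} \<inter> g i -` {..a})"
  have "closed T"
    unfolding T_def using assms(1)
    by (intro closed_UN ballI continuous_closed_preimage[OF cont] closed_atLeastAtMost closed_atMost) auto
  moreover have "s \<in> T" "bdd_below T" using hit unfolding T_def by (auto intro: bdd_belowI[of _ 0])
  ultimately have "Inf T \<in> T" by (intro closed_contains_Inf) auto
  define \<tau> where "\<tau> = Inf T"
  have \<tau>: "\<tau> \<in> {0..t}" "\<exists>i\<in>I. g i \<tau> \<le> a"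
    using \<open>Inf T \<in> T\<close> unfolding \<tau>_def T_def by auto
  have below: "a < g i u" if "i \<in> I" "u \<in> {0..<\<tau>}" for i u
  proof (rule ccontr)
    assume "\<not> a < g i u"
    moreover have "u \<in> {0..t}" using that(2) \<tau>(1) by auto
    ultimately have "u \<in> T" using that(1) unfolding T_def by force
    then show False using cInf_lower[OF _ \<open>bdd_below T\<close>] that unfolding \<tau>_def by fastforce
  qed
  have "0 < \<tau>"
  proof (rule ccontr)
    assume "\<not> 0 < \<tau>"
    then have "\<tau> = 0" using \<tau>(1) by simp
    then show False using \<tau>(2) start by (auto simp: not_le[symmetric])
  qed
  have "a \<le> g i u" if i: "i \<in> I" and u: "u \<in> {0..\<tau>}" for i u
  proof -
    have "closed ({0..\<tau>} \<inter> g i -` {a..})"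
      by (rule continuous_closed_preimage[OF continuous_on_subset[OF cont[OF i]]]) (use \<tau> in auto)
    moreover have "{0..<\<tau>} \<subseteq> {0..\<tau>} \<inter> g i -` {a..}" using below[OF i] by (auto simp: less_imp_le)
    ultimately have "closure {0..<\<tau>} \<subseteq> {0..\<tau>} \<inter> g i -` {a..}" by (rule closure_minimal[rotated])
    then show ?thesis using u closure_atLeastLessThan[OF \<open>0 < \<tau>\<close>] by auto
  qed
  then show ?thesis using \<tau> by blast
qed

lemma mem_cbox_zero_const_cart: "(v::real^'m) \<in> cbox 0 (\<chi> _. b) \<longleftrightarrow> (\<forall>p. 0 \<le> v$p \<and> v$p \<le> b)"
  by (simp add: mem_box_cart)

lemma cbox_zero_const_mono: "b \<le> b' \<Longrightarrow> cbox 0 (\<chi> _. b) \<subseteq> cbox (0::real^'m) (\<chi> _. b')"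
  unfolding subset_iff mem_cbox_zero_const_cart by (blast intro: order_trans)

lemma brouwer_prescribed_products:
  fixes G :: "real^'m \<Rightarrow> 'm \<Rightarrow> real"
  assumes "0 < \<beta>" "0 < \<mu>"
    and cont: "\<And>e. e \<in> E \<Longrightarrow> continuous_on (cbox 0 (\<chi> _. \<beta>)) (\<lambda>v. G v e)"
    and lower: "\<And>v e. v \<in> cbox 0 (\<chi> _. \<beta>) \<Longrightarrow> e \<in> E \<Longrightarrow> \<mu> \<le> G v e"
    and c: "\<forall>e\<in>E. 0 \<le> c e \<and> c e \<le> \<beta> * \<mu>"
  obtains v where "v \<in> cbox 0 (\<chi> _. \<beta>)" "\<forall>e\<in>E. v$e * G v e = c e"
proof -
  define B :: "(real^'m) set" where "B = cbox 0 (\<chi> _. \<beta>)"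
  define T where "T v = (\<chi> e. if e \<in> E then c e / G v e else 0)" for v
  have G_pos: "0 < G v e" if "v \<in> B" "e \<in> E" for v e
    using lower[of v e] that \<open>0 < \<mu>\<close> unfolding B_def by linarith
  have "continuous_on B T"
    unfolding T_def
  proof (rule continuous_on_vec_lambda)
    fix e
    have "continuous_on B (\<lambda>v. c e / G v e)" if "e \<in> E"
      using G_pos[OF _ that] cont[OF that] unfolding B_def
      by (intro continuous_on_divide continuous_on_const) force+
    then show "continuous_on B (\<lambda>v. if e \<in> E then c e / G v e else 0)"
      by (cases "e \<in> E") auto
  qed
  moreover have "T \<in> B \<rightarrow> B"
  proof
    fix v assume v: "v \<in> B"
    have "0 \<le> T v $ e \<and> T v $ e \<le> \<beta>" for e
    proof (cases "e \<in> E")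
      case True
      have "c e / G v e \<le> (\<beta> * \<mu>) / \<mu>"
        using c True lower[of v e] v \<open>0 < \<mu>\<close> unfolding B_def by (intro frac_le) auto
      then show ?thesis using True c G_pos[OF v True] \<open>0 < \<mu>\<close> by (simp add: T_def)
    qed (use \<open>0 < \<beta>\<close> in \<open>simp add: T_def\<close>)
    then show "T v \<in> B" unfolding B_def mem_cbox_zero_const_cart by blast
  qed
  moreover have "0 \<in> B" using \<open>0 < \<beta>\<close> unfolding B_def mem_cbox_zero_const_cart by simp
  then have "compact B" "convex B" "B \<noteq> {}" unfolding B_def by auto
  ultimately obtain v where v: "v \<in> B" "T v = v" using brouwer by metis
  have "v$e * G v e = c e" if "e \<in> E" for e
  proof -
    have "v$e = T v $ e" using v(2) by simp
    also have "\<dots> = c e / G v e" using that by (simp add: T_def)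
    finally show ?thesis using G_pos[OF v(1) that] by simp
  qed
  then show ?thesis using that v(1) unfolding B_def by blast
qed

locale kolmogorov_system =
  fixes Ps P0 :: "real^'n::finite" and J :: "('n \<times> 'n) set"
  assumes Ps_pos: "\<And>k. 0 < Ps$k"
    and J_irrefl: "\<And>e. e \<in> J \<Longrightarrow> fst e \<noteq> snd e"
    and gap_P0_nonzero: "\<And>e. e \<in> J \<Longrightarrow> ratio_gap Ps e P0 \<noteq> 0"
begin

definition orient :: "'n \<times> 'n \<Rightarrow> real" where
  "orient e = sgn (ratio_gap Ps e P0)"

definition ogap :: "'n \<times> 'n \<Rightarrow> real^'n \<Rightarrow> real" where
  "ogap e X = orient e * ratio_gap Ps e X"

definition ray :: "'n \<times> 'n \<Rightarrow> real^'n" where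
  "ray e = orient e *\<^sub>R gam (snd e) (fst e)"

definition inv_sum :: real where
  "inv_sum = (\<Sum>k\<in>UNIV. 1 / Ps$k)"

lemma orient_sq: "e \<in> J \<Longrightarrow> orient e * orient e = 1"
  using gap_P0_nonzero unfolding orient_def by (auto simp: sgn_if)

lemma ogap_P0_pos: "e \<in> J \<Longrightarrow> 0 < ogap e P0"
  using gap_P0_nonzero[of e] unfolding ogap_def orient_def by (simp add: sgn_if)

lemma linear_ogap: "linear (ogap e)"
  by (rule linearI) (simp_all add: ogap_def ratio_gap_def add_divide_distrib algebra_simps)

lemma kolm_rhs_rays: "kolm_rhs J w Ps X = (\<Sum>e\<in>J. (w e * ogap e X) *\<^sub>R ray e)"
  unfolding kolm_rhs_ratio_gap
proof (rule sum.cong[OF refl])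
  fix e assume "e \<in> J"
  then show "(w e * ratio_gap Ps e X) *\<^sub>R gam (snd e) (fst e) = (w e * ogap e X) *\<^sub>R ray e"
    using orient_sq by (simp add: ogap_def ray_def algebra_simps)
qed

lemma QJ_rays: "QJ J P0 Ps = {(\<Sum>e\<in>J. c e *\<^sub>R ray e) | c. \<forall>e\<in>J. 0 \<le> c e}"
  unfolding QJ_def ray_def orient_def ratio_gap_def by (simp add: case_prod_beta)

lemma inv_sum_ge: "1 / Ps$k \<le> inv_sum"
  unfolding inv_sum_def by (rule member_le_sum) (use Ps_pos in \<open>auto simp: less_imp_le\<close>)

lemma inv_sum_pos: "0 < inv_sum"
  using Ps_pos inv_sum_ge by (metis less_le_trans zero_less_divide_1_iff)

lemma abs_orient_le: "\<bar>orient e\<bar> \<le> 1"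
  unfolding orient_def by (simp add: sgn_if)

lemma abs_ogap_le: "\<bar>ogap e X\<bar> \<le> 2 * inv_sum * norm X"
proof -
  have ratio_le: "\<bar>X$k / Ps$k\<bar> \<le> inv_sum * norm X" for k
  proof -
    have "\<bar>X$k / Ps$k\<bar> = (1 / Ps$k) * \<bar>X$k\<bar>" using Ps_pos[of k] by (simp add: abs_divide)
    also have "\<dots> \<le> inv_sum * norm X"
      by (intro mult_mono inv_sum_ge component_le_norm_cart) (use Ps_pos[of k] inv_sum_pos in auto)
    finally show ?thesis .
  qed
  have "\<bar>ratio_gap Ps e X\<bar> \<le> 2 * inv_sum * norm X"
    unfolding ratio_gap_def using ratio_le[of "fst e"] ratio_le[of "snd e"] by linarith
  then have "\<bar>orient e\<bar> * \<bar>ratio_gap Ps e X\<bar> \<le> 1 * (2 * inv_sum * norm X)"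
    by (intro mult_mono abs_orient_le) auto
  then show ?thesis unfolding ogap_def abs_mult by simp
qed

lemma norm_ray_le: "norm (ray e) \<le> 2"
  using mult_mono[OF abs_orient_le norm_gam_le] unfolding ray_def by simp

lemma abs_ogap_ray_le: "\<bar>ogap e (ray f)\<bar> \<le> 4 * inv_sum"
  using order_trans[OF abs_ogap_le mult_left_mono[OF norm_ray_le]] inv_sum_pos by simp

lemma weighted_sum_ray:
  assumes "e \<in> J"
  shows "(\<Sum>k\<in>UNIV. (X$k / Ps$k) * ray e $ k) = - ogap e X"
proof -
  have "(\<Sum>k\<in>UNIV. (X$k / Ps$k) * ray e $ k) = orient e * (\<Sum>k\<in>UNIV. (X$k / Ps$k) * gam (snd e) (fst e) $ k)"
    unfolding ray_def by (simp add: sum_distrib_left algebra_simps)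
  also have "\<dots> = orient e * (X$fst e / Ps$fst e - X$snd e / Ps$snd e)"
    using sum_mult_gam[of "fst e" "snd e" "\<lambda>k. X$k / Ps$k"] J_irrefl[OF assms] by simp
  finally show ?thesis by (simp add: ogap_def ratio_gap_def algebra_simps)
qed

lemma norm_kolm_rhs_le:
  assumes "\<forall>e\<in>J. \<bar>w e\<bar> \<le> 1"
  shows "norm (kolm_rhs J w Ps X) \<le> (4 * inv_sum * card J) * norm X"
proof -
  have "norm (kolm_rhs J w Ps X) \<le> (\<Sum>e\<in>J. \<bar>w e\<bar> * \<bar>ogap e X\<bar> * norm (ray e))"
    unfolding kolm_rhs_rays by (rule order_trans[OF norm_sum]) (simp add: abs_mult)
  also have "\<dots> \<le> (\<Sum>e\<in>J. 1 * (2 * inv_sum * norm X) * 2)"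
    by (intro sum_mono mult_mono abs_ogap_le norm_ray_le) (use assms inv_sum_pos in auto)
  finally show ?thesis by (simp add: algebra_simps)
qed

lemma lyapunov_derivative_value:
  "(\<Sum>k\<in>UNIV. 2 * (X$k) * (kolm_rhs J w Ps X $ k) / Ps$k) = - 2 * (\<Sum>e\<in>J. w e * (ogap e X)^2)"
proof -
  have "(\<Sum>k\<in>UNIV. 2 * (X$k) * (kolm_rhs J w Ps X $ k) / Ps$k)
      = 2 * (\<Sum>k\<in>UNIV. \<Sum>e\<in>J. (w e * ogap e X) * ((X$k / Ps$k) * ray e $ k))"
    unfolding kolm_rhs_rays by (simp add: sum_component sum_distrib_left sum_divide_distrib algebra_simps)
  also have "\<dots> = 2 * (\<Sum>e\<in>J. (w e * ogap e X) * (\<Sum>k\<in>UNIV. (X$k / Ps$k) * ray e $ k))"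
    by (simp only: sum.swap[of _ UNIV J] sum_distrib_left)
  also have "\<dots> = 2 * (\<Sum>e\<in>J. (w e * ogap e X) * (- ogap e X))"
    by (intro arg_cong[where f = "(*) 2"] sum.cong refl) (simp only: weighted_sum_ray)
  also have "\<dots> = - 2 * (\<Sum>e\<in>J. w e * (ogap e X)^2)"
    by (simp add: sum_negf power2_eq_square algebra_simps)
  finally show ?thesis .
qed

lemma cone_coeff_sum_ge:
  assumes c: "\<forall>f\<in>J. 0 \<le> c f" and "e \<in> J" "m \<le> ogap e P0"
    and "ogap e (P0 + (\<Sum>f\<in>J. c f *\<^sub>R ray f)) \<le> m/2"
  shows "m / (8 * inv_sum) \<le> (\<Sum>f\<in>J. c f)"
proof -
  have "(\<Sum>f\<in>J. c f * - (4 * inv_sum)) \<le> (\<Sum>f\<in>J. c f * ogap e (ray f))"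
    using abs_ogap_ray_le[of e] c by (intro sum_mono mult_left_mono) (auto simp: abs_le_iff minus_le_iff)
  then have "- ((\<Sum>f\<in>J. c f) * (4 * inv_sum)) \<le> (\<Sum>f\<in>J. c f * ogap e (ray f))"
    by (simp add: sum_negf sum_distrib_right)
  moreover have "ogap e (P0 + (\<Sum>f\<in>J. c f *\<^sub>R ray f)) = ogap e P0 + (\<Sum>f\<in>J. c f * ogap e (ray f))"
    by (simp add: linear_add[OF linear_ogap] linear_sum[OF linear_ogap] linear_scale[OF linear_ogap])
  ultimately have "m - (\<Sum>f\<in>J. c f) * (4 * inv_sum) \<le> m/2"
    using assms(3,4) by linarith
  then show ?thesis using inv_sum_pos by (simp add: field_simps)
qed

lemma continuous_on_ogap: "continuous_on A P \<Longrightarrow> continuous_on A (\<lambda>u. ogap e (P u))"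
  unfolding ogap_def ratio_gap_def
  by (intro continuous_intros) (use Ps_pos in \<open>auto simp: less_imp_neq[symmetric]\<close>)

context
  fixes w :: "'n \<times> 'n \<Rightarrow> real" and P :: "real \<Rightarrow> real^'n"
  assumes w_nonneg: "\<forall>e\<in>J. 0 \<le> w e"
    and solution: "\<forall>s\<ge>0. (P has_vector_derivative kolm_rhs J w Ps (P s)) (at s within {0..})"
begin

lemma continuous_on_solution: "continuous_on {0..} P"
  using solution by (auto simp: continuous_on_eq_continuous_within intro: has_vector_derivative_continuous)

lemma solution_derivative_within:
  "0 \<le> a \<Longrightarrow> x \<in> {a..b} \<Longrightarrow> (P has_vector_derivative kolm_rhs J w Ps (P x)) (at x within {a..b})"
  by (rule has_vector_derivative_within_subset[of _ _ _ "{0..}"]) (use solution in auto)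

lemma continuous_on_flux: "0 \<le> a \<Longrightarrow> continuous_on {a..b} (\<lambda>u. w e * ogap e (P u))"
  by (intro continuous_intros continuous_on_ogap continuous_on_subset[OF continuous_on_solution]) auto

lemma solution_increment:
  assumes "0 \<le> a" "a \<le> b"
  shows "P b - P a = (\<Sum>e\<in>J. integral {a..b} (\<lambda>u. w e * ogap e (P u)) *\<^sub>R ray e)"
proof -
  have "((\<lambda>u. kolm_rhs J w Ps (P u)) has_integral P b - P a) {a..b}"
    by (rule fundamental_theorem_of_calculus[OF assms(2) solution_derivative_within[OF assms(1)]])
  moreover have "((\<lambda>u. kolm_rhs J w Ps (P u)) has_integral
      (\<Sum>e\<in>J. integral {a..b} (\<lambda>u. w e * ogap e (P u)) *\<^sub>R ray e)) {a..b}"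
    unfolding kolm_rhs_rays
    by (intro has_integral_sum finite has_integral_scaleR_left integrable_integral
          integrable_continuous_interval continuous_on_flux assms(1))
  ultimately show ?thesis by (rule has_integral_unique)
qed

lemma lyapunov_increment:
  assumes "0 \<le> a" "a \<le> b"
  shows "((\<lambda>u. - 2 * (\<Sum>e\<in>J. w e * (ogap e (P u))^2)) has_integral
           lyapunov Ps (P b) - lyapunov Ps (P a)) {a..b}"
proof (rule fundamental_theorem_of_calculus[OF assms(2)])
  fix x assume "x \<in> {a..b}"
  note dP = solution_derivative_within[OF assms(1) this]
  have "((\<lambda>s. P s $ k) has_real_derivative kolm_rhs J w Ps (P x) $ k) (at x within {a..b})" for k
    unfolding has_real_derivative_iff_has_vector_derivative
    by (rule bounded_linear.has_vector_derivative[OF bounded_linear_vec_nth dP])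
  then have "((\<lambda>s. (P s $ k)^2 / Ps$k) has_real_derivative
      2 * (P x $ k) * (kolm_rhs J w Ps (P x) $ k) / Ps$k) (at x within {a..b})" for k
    by (rule DERIV_cong[OF DERIV_cdivide[OF DERIV_power]]) (simp add: algebra_simps)
  then have "((\<lambda>s. lyapunov Ps (P s)) has_real_derivative
      (\<Sum>k\<in>UNIV. 2 * (P x $ k) * (kolm_rhs J w Ps (P x) $ k) / Ps$k)) (at x within {a..b})"
    unfolding lyapunov_def by (rule DERIV_sum)
  then show "((\<lambda>s. lyapunov Ps (P s)) has_vector_derivative
      - 2 * (\<Sum>e\<in>J. w e * (ogap e (P x))^2)) (at x within {a..b})"
    unfolding has_real_derivative_iff_has_vector_derivative[symmetric] lyapunov_derivative_value .
qed

lemma lyapunov_antimono: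
  assumes "0 \<le> a" "a \<le> b"
  shows "lyapunov Ps (P b) \<le> lyapunov Ps (P a)"
proof -
  have "lyapunov Ps (P b) - lyapunov Ps (P a) \<le> 0"
    by (rule has_integral_le[OF lyapunov_increment[OF assms] has_integral_0])
       (use w_nonneg in \<open>auto intro: sum_nonneg\<close>)
  then show ?thesis by simp
qed

lemma solution_from_P0:
  assumes "P 0 = P0" "0 \<le> t"
  shows "P t = P0 + (\<Sum>e\<in>J. integral {0..t} (\<lambda>u. w e * ogap e (P u)) *\<^sub>R ray e)"
  using solution_increment[OF order_refl assms(2)] assms(1) by (simp add: algebra_simps)

lemma solution_in_cone:
  assumes "P 0 = P0" "0 \<le> t" "\<forall>e\<in>J. \<forall>u\<in>{0..t}. 0 \<le> ogap e (P u)"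
  shows "P t \<in> (\<lambda>q. P0 + q) ` QJ J P0 Ps"
proof -
  define c where "c e = integral {0..t} (\<lambda>u. w e * ogap e (P u))" for e
  have "0 \<le> c e" if "e \<in> J" for e
    unfolding c_def
    by (rule integral_nonneg[OF integrable_continuous_interval[OF continuous_on_flux]])
       (use that assms w_nonneg in auto)
  then have "(\<Sum>e\<in>J. c e *\<^sub>R ray e) \<in> QJ J P0 Ps" unfolding QJ_rays by blast
  moreover have "P t = P0 + (\<Sum>e\<in>J. c e *\<^sub>R ray e)"
    unfolding c_def by (rule solution_from_P0[OF assms(1,2)])
  ultimately show ?thesis by blast
qed

lemma lyapunov_dissipation:
  assumes "0 \<le> \<tau>" "0 \<le> m" and stay: "\<forall>e\<in>J. \<forall>u\<in>{0..\<tau>}. m/2 \<le> ogap e (P u)"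
  shows "lyapunov Ps (P \<tau>) - lyapunov Ps (P 0)
    \<le> - (\<Sum>e\<in>J. m * integral {0..\<tau>} (\<lambda>u. w e * ogap e (P u)))"
proof (rule has_integral_le[OF lyapunov_increment[OF order_refl \<open>0 \<le> \<tau>\<close>]])
  show "((\<lambda>u. - (\<Sum>e\<in>J. m * (w e * ogap e (P u)))) has_integral
      - (\<Sum>e\<in>J. m * integral {0..\<tau>} (\<lambda>u. w e * ogap e (P u)))) {0..\<tau>}"
    by (intro has_integral_neg has_integral_sum finite has_integral_mult_right integrable_integral
        integrable_continuous_interval continuous_on_flux order_refl)
  fix u assume u: "u \<in> {0..\<tau>}"
  have "m * (w e * ogap e (P u)) \<le> 2 * (w e * (ogap e (P u))^2)" if "e \<in> J" for e
  proof -
    have "m/2 \<le> ogap e (P u)" using stay that u by blast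
    then have "0 \<le> (w e * ogap e (P u)) * (2 * ogap e (P u) - m)"
      using w_nonneg that \<open>0 \<le> m\<close> by (intro mult_nonneg_nonneg) auto
    then show ?thesis by (simp add: power2_eq_square algebra_simps)
  qed
  then have "(\<Sum>e\<in>J. m * (w e * ogap e (P u))) \<le> 2 * (\<Sum>e\<in>J. w e * (ogap e (P u))^2)"
    unfolding sum_distrib_left by (rule sum_mono)
  then show "- 2 * (\<Sum>e\<in>J. w e * (ogap e (P u))^2) \<le> - (\<Sum>e\<in>J. m * (w e * ogap e (P u)))"
    by simp
qed

lemma lyapunov_drop:
  assumes P0: "P 0 = P0" and m: "0 < m" "\<forall>e\<in>J. m \<le> ogap e P0" and "0 \<le> \<tau>"
    and stay: "\<forall>e\<in>J. \<forall>u\<in>{0..\<tau>}. m/2 \<le> ogap e (P u)"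
    and hit: "e \<in> J" "ogap e (P \<tau>) \<le> m/2"
  shows "lyapunov Ps (P \<tau>) \<le> lyapunov Ps P0 - m^2 / (8 * inv_sum)"
proof -
  define c where "c f = integral {0..\<tau>} (\<lambda>u. w f * ogap f (P u))" for f
  have "0 \<le> ogap f (P u)" if "f \<in> J" "u \<in> {0..\<tau>}" for f u
    using stay that m(1) by fastforce
  then have c_nonneg: "0 \<le> c f" if "f \<in> J" for f
    unfolding c_def
    by (intro integral_nonneg integrable_continuous_interval continuous_on_flux \<open>0 \<le> \<tau>\<close>)
       (use that w_nonneg in \<open>auto intro!: mult_nonneg_nonneg\<close>)
  have "P \<tau> = P0 + (\<Sum>f\<in>J. c f *\<^sub>R ray f)"
    unfolding c_def by (rule solution_from_P0[OF P0 \<open>0 \<le> \<tau>\<close>])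
  then have "ogap e (P0 + (\<Sum>f\<in>J. c f *\<^sub>R ray f)) \<le> m/2" using hit(2) by simp
  then have "m / (8 * inv_sum) \<le> (\<Sum>f\<in>J. c f)"
    using c_nonneg hit(1) m(2) by (intro cone_coeff_sum_ge) auto
  then have "m^2 / (8 * inv_sum) \<le> (\<Sum>f\<in>J. m * c f)"
    using mult_left_mono[of _ _ m] m(1) by (fastforce simp: power2_eq_square sum_distrib_left[symmetric])
  moreover have "lyapunov Ps (P \<tau>) - lyapunov Ps (P 0) \<le> - (\<Sum>f\<in>J. m * c f)"
    unfolding c_def using m(1) by (intro lyapunov_dissipation \<open>0 \<le> \<tau>\<close> stay) simp
  ultimately show ?thesis unfolding P0 by linarith
qed

lemma solution_near_P0_in_cone:
  assumes P0: "P 0 = P0" and m: "0 < m" "\<forall>e\<in>J. m \<le> ogap e P0" and "0 \<le> t"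
    and near: "lyapunov Ps P0 - m^2 / (8 * inv_sum) < lyapunov Ps (P t)"
  shows "P t \<in> (\<lambda>q. P0 + q) ` QJ J P0 Ps"
proof (rule solution_in_cone[OF P0 \<open>0 \<le> t\<close>], rule ccontr)
  assume "\<not> (\<forall>e\<in>J. \<forall>u\<in>{0..t}. 0 \<le> ogap e (P u))"
  then obtain e s where hit: "e \<in> J" "s \<in> {0..t}" "ogap e (P s) < 0" by (auto simp: not_le)
  have cont: "continuous_on {0..t} (\<lambda>u. ogap f (P u))" for f
    by (intro continuous_on_ogap continuous_on_subset[OF continuous_on_solution]) auto
  have start: "m/2 < ogap f (P 0)" if "f \<in> J" for f
    using m that P0 by fastforce
  have "ogap e (P s) \<le> m/2" using hit(3) m(1) by linarith
  then obtain \<tau> where \<tau>: "\<tau> \<in> {0..t}" "\<exists>e\<in>J. ogap e (P \<tau>) \<le> m/2"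
      "\<forall>e\<in>J. \<forall>u\<in>{0..\<tau>}. m/2 \<le> ogap e (P u)"
    using first_hitting_time[where g = "\<lambda>f u. ogap f (P u)", OF finite cont start hit(1,2)] by blast
  then have "lyapunov Ps (P \<tau>) \<le> lyapunov Ps P0 - m^2 / (8 * inv_sum)"
    using lyapunov_drop[OF P0 m] by auto
  moreover have "lyapunov Ps (P t) \<le> lyapunov Ps (P \<tau>)"
    using \<tau>(1) by (intro lyapunov_antimono) auto
  ultimately show False using near by linarith
qed

end

lemma continuous_on_phi1_rates:
  "continuous_on (cbox 0 (\<chi> _. 1)) (\<lambda>v. phi1 (kolm_rhs J (($) v) Ps) P0)"
proof (rule continuous_on_phi1_param)
  fix v x assume "v \<in> cbox (0::real^('n \<times> 'n)) (\<chi> _. 1)"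
  then have "\<forall>e\<in>J. \<bar>v$e\<bar> \<le> 1" unfolding mem_cbox_zero_const_cart by (metis abs_of_nonneg)
  then show "norm (kolm_rhs J (($) v) Ps x) \<le> (4 * inv_sum * card J) * norm x"
    by (rule norm_kolm_rhs_le)
next
  show "0 \<le> 4 * inv_sum * card J" using inv_sum_pos by simp
next
  fix g :: "real^('n \<times> 'n) \<Rightarrow> real^'n"
  assume "continuous_on (cbox 0 (\<chi> _. 1)) g"
  then show "continuous_on (cbox 0 (\<chi> _. 1)) (\<lambda>v. kolm_rhs J (($) v) Ps (g v))"
    unfolding kolm_rhs_rays by (intro continuous_intros continuous_on_ogap)
qed

lemma phi1_rates_near_P0:
  assumes "0 < r"
  obtains \<beta> where "0 < \<beta>" "\<beta> \<le> 1"
    "\<And>v. v \<in> cbox 0 (\<chi> _. \<beta>) \<Longrightarrow> dist (phi1 (kolm_rhs J (($) v) Ps) P0) P0 < r"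
proof -
  define Y where "Y v = phi1 (kolm_rhs J (($) v) Ps) P0" for v :: "real^('n \<times> 'n)"
  have "Y 0 = P0"
    unfolding Y_def kolm_rhs_def by (simp add: phi1_zero)
  moreover have "(0::real^('n \<times> 'n)) \<in> cbox 0 (\<chi> _. 1)" by (simp add: mem_box_cart)
  ultimately obtain d where d: "0 < d"
    "\<And>v. v \<in> cbox 0 (\<chi> _. 1) \<Longrightarrow> dist v 0 < d \<Longrightarrow> dist (Y v) P0 < r"
    using continuous_on_phi1_rates assms unfolding continuous_on_iff Y_def by metis
  define N where "N = real CARD('n \<times> 'n)"
  have "1 \<le> N" unfolding N_def by (simp del: card_prod add: Suc_leI)
  define \<beta> where "\<beta> = min 1 (d / (2 * N))"
  have "0 < \<beta>" "\<beta> \<le> 1" using d \<open>1 \<le> N\<close> unfolding \<beta>_def by auto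
  moreover have "dist (Y v) P0 < r" if v: "v \<in> cbox 0 (\<chi> _. \<beta>)" for v
  proof (rule d(2))
    show "v \<in> cbox 0 (\<chi> _. 1)" using v cbox_zero_const_mono[OF \<open>\<beta> \<le> 1\<close>] by blast
    have v_le: "0 \<le> v$p \<and> v$p \<le> \<beta>" for p using v unfolding mem_cbox_zero_const_cart by blast
    have "norm v \<le> (\<Sum>p\<in>UNIV. \<bar>v$p\<bar>)" by (rule norm_le_l1_cart)
    also have "\<dots> \<le> (\<Sum>p\<in>(UNIV::('n \<times> 'n) set). d / (2 * N))"
      using v_le by (intro sum_mono) (auto simp: \<beta>_def)
    also have "\<dots> = d / 2" using \<open>1 \<le> N\<close> unfolding N_def by simp
    finally show "dist v 0 < d" using d(1) by simp
  qed
  ultimately show ?thesis using that unfolding Y_def by blast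
qed

lemma increment_reachable:
  assumes v_nonneg: "\<forall>e. 0 \<le> v$e"
    and rates: "\<forall>e\<in>J. v$e * ogap e (phi1 (kolm_rhs J (($) v) Ps) P0) = c e"
  shows "P0 + (\<Sum>e\<in>J. c e *\<^sub>R ray e) \<in> PhiJ J Ps P0"
proof -
  let ?F = "kolm_rhs J (($) v) Ps"
  have "linexp ?F 1 P0 = P0 + ?F (phi1 ?F P0)"
    by (rule linexp_1[OF bounded_linear_kolm_rhs])
  also have "?F (phi1 ?F P0) = (\<Sum>e\<in>J. c e *\<^sub>R ray e)"
    unfolding kolm_rhs_rays[of _ "phi1 ?F P0"] by (intro sum.cong refl) (simp add: rates[rule_format])
  finally have "linexp ?F 1 P0 = P0 + (\<Sum>e\<in>J. c e *\<^sub>R ray e)" .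
  then show ?thesis
    unfolding PhiJ_def
    using v_nonneg linexp_0
      has_vector_derivative_linexp[OF bounded_linear_kolm_rhs]
    by (intro CollectI exI[of _ "($) v"] exI[of _ "\<lambda>s. linexp ?F s P0"] exI[of _ 1]) auto
qed

lemma small_cone_reachable:
  assumes "0 < m" "\<forall>e\<in>J. m \<le> ogap e P0"
  obtains \<eta> where "0 < \<eta>"
    "\<And>c. \<forall>e\<in>J. 0 \<le> c e \<and> c e \<le> \<eta> \<Longrightarrow> P0 + (\<Sum>e\<in>J. c e *\<^sub>R ray e) \<in> PhiJ J Ps P0"
proof -
  have "0 < m / (4 * inv_sum)" using assms(1) inv_sum_pos by simp
  then obtain \<beta> where \<beta>: "0 < \<beta>" "\<beta> \<le> 1"
    and close: "\<And>v. v \<in> cbox 0 (\<chi> _. \<beta>) \<Longrightarrow> dist (phi1 (kolm_rhs J (($) v) Ps) P0) P0 < m / (4 * inv_sum)"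
    using phi1_rates_near_P0 by blast
  have near: "\<forall>e\<in>J. m/2 \<le> ogap e (phi1 (kolm_rhs J (($) v) Ps) P0)" if "v \<in> cbox 0 (\<chi> _. \<beta>)" for v
  proof
    fix e assume "e \<in> J"
    let ?Y = "phi1 (kolm_rhs J (($) v) Ps) P0"
    have "\<bar>ogap e ?Y - ogap e P0\<bar> \<le> 2 * inv_sum * norm (?Y - P0)"
      using abs_ogap_le[of e "?Y - P0"] by (simp add: linear_diff[OF linear_ogap])
    also have "\<dots> < 2 * inv_sum * (m / (4 * inv_sum))"
      using close[OF that] inv_sum_pos by (intro mult_strict_left_mono) (simp_all add: dist_norm)
    also have "\<dots> = m/2" using inv_sum_pos by simp
    finally have "\<bar>ogap e ?Y - ogap e P0\<bar> < m/2" .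
    moreover have "m \<le> ogap e P0" using assms(2) \<open>e \<in> J\<close> by blast
    ultimately show "m/2 \<le> ogap e ?Y" by linarith
  qed
  have cont: "continuous_on (cbox 0 (\<chi> _. \<beta>)) (\<lambda>v. ogap e (phi1 (kolm_rhs J (($) v) Ps) P0))" for e
    by (intro continuous_on_ogap continuous_on_subset[OF continuous_on_phi1_rates]
        cbox_zero_const_mono \<open>\<beta> \<le> 1\<close>)
  show ?thesis
  proof (rule that)
    show "0 < \<beta> * (m / 2)" using \<beta> assms(1) by simp
    fix c assume c: "\<forall>e\<in>J. 0 \<le> c e \<and> c e \<le> \<beta> * (m / 2)"
    have "m/2 \<le> ogap e (phi1 (kolm_rhs J (($) v) Ps) P0)" if "v \<in> cbox 0 (\<chi> _. \<beta>)" "e \<in> J" for v e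
      using near that by blast
    moreover have "0 < m/2" using assms(1) by simp
    ultimately obtain v where "v \<in> cbox 0 (\<chi> _. \<beta>)"
      "\<forall>e\<in>J. v$e * ogap e (phi1 (kolm_rhs J (($) v) Ps) P0) = c e"
      using brouwer_prescribed_products[where G = "\<lambda>v e. ogap e (phi1 (kolm_rhs J (($) v) Ps) P0)",
          OF \<open>0 < \<beta>\<close> _ cont _ c] by blast
    then show "P0 + (\<Sum>e\<in>J. c e *\<^sub>R ray e) \<in> PhiJ J Ps P0"
      by (intro increment_reachable) (auto simp: mem_cbox_zero_const_cart)
  qed
qed

lemma weighted_sum_cone_le:
  assumes "\<forall>e\<in>J. 0 \<le> c e" "\<forall>e\<in>J. m \<le> ogap e P0"
  shows "(\<Sum>k\<in>UNIV. (P0$k / Ps$k) * (\<Sum>e\<in>J. c e *\<^sub>R ray e) $ k) \<le> - m * (\<Sum>e\<in>J. c e)"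
proof -
  have "(\<Sum>k\<in>UNIV. (P0$k / Ps$k) * (\<Sum>e\<in>J. c e *\<^sub>R ray e) $ k)
      = (\<Sum>e\<in>J. c e * (\<Sum>k\<in>UNIV. (P0$k / Ps$k) * ray e $ k))"
    by (simp add: sum_component sum_distrib_left sum.swap[of _ UNIV J] algebra_simps)
  also have "\<dots> = (\<Sum>e\<in>J. c e * - ogap e P0)"
    by (intro sum.cong refl) (simp only: weighted_sum_ray)
  also have "\<dots> \<le> (\<Sum>e\<in>J. c e * - m)"
    using assms by (intro sum_mono mult_left_mono) auto
  finally show ?thesis by (simp add: sum_negf sum_distrib_left ac_simps)
qed

text \<open>Inside \<open>cone_nbhd m \<eta>\<close> the Lyapunov bound keeps reachable points in the cone,
  and the weighted linear bound keeps the cone coefficients below \<open>\<eta>\<close>.\<close>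

definition cone_nbhd :: "real \<Rightarrow> real \<Rightarrow> (real^'n) set" where
  "cone_nbhd m \<eta> = {X. lyapunov Ps P0 - m^2 / (8 * inv_sum) < lyapunov Ps X}
      \<inter> {X. - (m * \<eta>) < (\<Sum>k\<in>UNIV. (P0$k / Ps$k) * (X - P0) $ k)}"

lemma open_cone_nbhd: "open (cone_nbhd m \<eta>)"
  unfolding cone_nbhd_def lyapunov_def
  by (intro open_Int open_Collect_less continuous_intros) (use Ps_pos in \<open>auto simp: less_imp_neq[symmetric]\<close>)

lemma P0_in_cone_nbhd: "0 < m \<Longrightarrow> 0 < \<eta> \<Longrightarrow> P0 \<in> cone_nbhd m \<eta>"
  unfolding cone_nbhd_def using inv_sum_pos by simp

lemma PhiJ_inter_cone_nbhd:
  assumes "0 < m" "\<forall>e\<in>J. m \<le> ogap e P0"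
  shows "PhiJ J Ps P0 \<inter> cone_nbhd m \<eta> \<subseteq> (\<lambda>q. P0 + q) ` QJ J P0 Ps"
proof
  fix x assume x: "x \<in> PhiJ J Ps P0 \<inter> cone_nbhd m \<eta>"
  then obtain w P t where "\<forall>e\<in>J. 0 \<le> w e" "0 < t" "P 0 = P0"
    "\<forall>s\<ge>0. (P has_vector_derivative kolm_rhs J w Ps (P s)) (at s within {0..})" "x = P t"
    unfolding PhiJ_def by blast
  then show "x \<in> (\<lambda>q. P0 + q) ` QJ J P0 Ps"
    using solution_near_P0_in_cone[of w P m t] assms x unfolding cone_nbhd_def by auto
qed

lemma cone_inter_cone_nbhd:
  assumes m: "0 < m" "\<forall>e\<in>J. m \<le> ogap e P0"
    and reach: "\<And>c. \<forall>e\<in>J. 0 \<le> c e \<and> c e \<le> \<eta> \<Longrightarrow> P0 + (\<Sum>e\<in>J. c e *\<^sub>R ray e) \<in> PhiJ J Ps P0"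
  shows "(\<lambda>q. P0 + q) ` QJ J P0 Ps \<inter> cone_nbhd m \<eta> \<subseteq> PhiJ J Ps P0"
proof
  fix x assume x: "x \<in> (\<lambda>q. P0 + q) ` QJ J P0 Ps \<inter> cone_nbhd m \<eta>"
  then obtain c where c: "\<forall>e\<in>J. 0 \<le> c e" and x_eq: "x = P0 + (\<Sum>e\<in>J. c e *\<^sub>R ray e)"
    unfolding QJ_rays by blast
  have "- (m * \<eta>) < - m * (\<Sum>e\<in>J. c e)"
    using x weighted_sum_cone_le[OF c m(2)] unfolding cone_nbhd_def x_eq by simp
  then have "(\<Sum>e\<in>J. c e) < \<eta>" using m(1) by simp
  moreover have "c e \<le> (\<Sum>e\<in>J. c e)" if "e \<in> J" for e
    using c that by (intro member_le_sum) auto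
  ultimately show "x \<in> PhiJ J Ps P0" unfolding x_eq using c by (intro reach) force
qed

lemma cone_eq_PhiJ_locally:
  "\<exists>U. open U \<and> P0 \<in> U \<and> ((\<lambda>q. P0 + q) ` QJ J P0 Ps) \<inter> U = PhiJ J Ps P0 \<inter> U"
proof -
  define m where "m = Min (insert 1 ((\<lambda>e. ogap e P0) ` J))"
  have m: "0 < m" "\<forall>e\<in>J. m \<le> ogap e P0"
    unfolding m_def using ogap_P0_pos by (auto simp: Min_gr_iff)
  obtain \<eta> where "0 < \<eta>"
    and reach: "\<And>c. \<forall>e\<in>J. 0 \<le> c e \<and> c e \<le> \<eta> \<Longrightarrow> P0 + (\<Sum>e\<in>J. c e *\<^sub>R ray e) \<in> PhiJ J Ps P0"
    using small_cone_reachable[OF m] by blast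
  show ?thesis
  proof (intro exI conjI)
    show "open (cone_nbhd m \<eta>)" by (rule open_cone_nbhd)
    show "P0 \<in> cone_nbhd m \<eta>" by (rule P0_in_cone_nbhd[OF m(1) \<open>0 < \<eta>\<close>])
    show "(\<lambda>q. P0 + q) ` QJ J P0 Ps \<inter> cone_nbhd m \<eta> = PhiJ J Ps P0 \<inter> cone_nbhd m \<eta>"
      using PhiJ_inter_cone_nbhd[OF m] cone_inter_cone_nbhd[where \<eta> = \<eta>, OF m reach] by auto
  qed
qed

end

theorem proposition1:
  fixes Ps P0 :: "real^'n::{finite,linorder}"
    and J :: "('n \<times> 'n) set"
  assumes "CARD('n) \<ge> 2"
    and "Ps \<in> simplex_pos"
    and "P0 \<in> simplex_pos"
    and "\<forall>(i,j)\<in>J. j < i"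
    and "\<forall>(i,j)\<in>J. P0$j / Ps$j - P0$i / Ps$i \<noteq> 0"
  shows "\<exists>U. open U \<and> P0 \<in> U \<and>
           ((\<lambda>q. P0 + q) ` QJ J P0 Ps) \<inter> U = PhiJ J Ps P0 \<inter> U"
proof -
  interpret kolmogorov_system Ps P0 J
    using assms(2,4,5) by unfold_locales (auto simp: simplex_pos_def ratio_gap_def)
  show ?thesis by (rule cone_eq_PhiJ_locally)
qed

end
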